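(* In every execution of the Minimmit protocol (described in the context), if a block $b$ receives an L-notarization, then no block $b'\neq b$ with $b'.\text{view}=b.\text{view}$ receives an M-notarization.
   Context: Setting. There are $n$ processors $\Pi=\{p_0,\dots,p_{n-1}\}$ and an integer $f$ with $5f+1\le n$. At most $f$ processors may be corrupted by an adversary during the execution and then behave arbitrarily (Byzantine); processors never corrupted are called correct. Processors communicate over point-to-point authenticated channels; every message is signed by its sender; a PKI validates signatures and $H$ is a collision-resistant hash function; attention is restricted to executions in which the adversary cannot forge signatures or find hash collisions. Time is divided into timeslots $t\in\mathbb{N}_{\ge 0}$ (partial synchrony): a message sent at time $t$ arrives at some time $t'>t$ with $t'\le \max\{\text{GST},t\}+\Delta$, where $\Delta$ is known to the protocol and GST is unknown and chosen by the adversary (who also chooses delivery times subject to this constraint). Clocks of correct processors advance in real time. When a correct processor sends a message to all processors, it regards that message as immediately received by itself. Transactions are unique messages signed by the environment; each timeslot each processor may receive a finite set of transactions. Each processor $p_i$ maintains an append-only log $\text{log}_i$ of distinct transactions, $\text{log}_i(t)$ denoting its value at the end of timeslot $t$. Blocks. $\text{lead}(v):=p_j$ with $j=v \bmod n$. The genesis block is $b_{\text{gen}}=(0,\lambda,\lambda)$ ($\lambda$ the empty sequence). Any other block is a tuple $b=(v,\text{Tr},h)$ signed by $\text{lead}(v)$, with $v\in\mathbb{N}_{\ge1}$ ($b.\text{view}=v$, "a view $v$ block"), $\text{Tr}=b.\text{Tr}$ a sequence of distinct transactions, and $h=b.h$ a hash value; its parent is the block $b'$ with $H(b')=h$. The ancestors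 of $b$ are $b$ and the ancestors of its parent ($b_{\text{gen}}$ has only itself). Two blocks are inconsistent if neither is an ancestor of the other. To finalise $b$ means: upon obtaining all ancestors of $b$, the processor sets its log to extend the concatenation of $b'.\text{Tr}$ over ancestors $b'$ of $b$ (with duplicates removed). Messages. A vote for $b$ is $(\text{vote},b)$. An M-notarization for $b$ is a set of $2f+1$ votes for $b$ signed by distinct processors; an L-notarization for $b$ is a set of $n-f$ votes for $b$ signed by distinct processors. A nullify$(v)$ message is $(\text{nullify},v)$; a nullification for view $v$ is a set of $2f+1$ nullify$(v)$ messages signed by distinct processors. In the claim, a block $b$ "receives an M-notarization" if $b=b_{\text{gen}}$ or at least $2f+1$ processors send votes for $b$; $b$ "receives an L-notarization" if $b=b_{\text{gen}}$ or at least $n-f$ processors send votes for $b$; view $v$ "receives a nullification" if at least $2f+1$ processors send nullify$(v)$ messages. Local state of each processor: $\mathtt{S}$, the set of all received messages (automatically updated; it contains a block $b$ if it contains any message having $b$ as an entry; initially it contains only $b_{\text{gen}}$ and an M- and L-notarization for $b_{\text{gen}}$); the current view $\mathtt{v}$ (initially 1; a processor enters view $v$ when $\mathtt{v}$ becomes $v$); a timer $\mathtt{T}$ (initially 0, increasing in real time, reset to 0 upon entering a new view); $\mathtt{nullified}$ (initially false) and $\mathtt{notarized}$ (initially $\bot$, a value different from every block). SelectParent$(\mathtt{S},\mathtt{v})$: let $v'<\mathtt{v}$ be greatest such that $\mathtt{S}$ contains an M-notarization for some block of view $v'$; output the lexicographically least such block. ProposeChild$(b,v)$: form a sequence Tr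 of distinct transactions containing all transactions received and not in $b'.\text{Tr}$ for any ancestor $b'\in\mathtt{S}$ of $b$, and send the block $(v,\text{Tr},H(b))$ to all processors. $\mathtt{S}$ contains a valid proposal $b$ for view $v$ if $\mathtt{S}$ contains (i) precisely one block of the form $b=(v,\text{Tr},h)$ signed by $\text{lead}(v)$, (ii) an M-notarization for some $b'$ with $H(b')=h$, say $b'.\text{view}=v'$, and (iii) a nullification for each view in the open interval $(v',v)$. At timeslot $t$ a nullification $N\subseteq\mathtt{S}$ for a view $v$ is new if $\mathtt{S}$ contained no nullification for $v$ at any earlier timeslot and $N$ is lexicographically least among nullifications for $v$ in $\mathtt{S}$; new M-notarizations and new L-notarizations for a block $b$ are defined analogously. Protocol (Minimmit): at every timeslot, correct $p_i$ does, in order: (1) send new nullifications in $\mathtt{S}$ to all processors; (2) send new M- and L-notarizations in $\mathtt{S}$ to all; (3) if $p_i=\text{lead}(\mathtt{v})$, execute ProposeChild(SelectParent$(\mathtt{S},\mathtt{v}),\mathtt{v})$; (4) if $\mathtt{S}$ contains a valid proposal $b$ for view $\mathtt{v}$ and $\mathtt{notarized}=\bot$ and $\mathtt{nullified}=$ false, set $\mathtt{notarized}:=b$ and send $(\text{vote},b)$ to all; (5) if $\mathtt{T}=2\Delta$, $\mathtt{nullified}=$ false and $\mathtt{notarized}=\bot$, set $\mathtt{nullified}:=$ true and send $(\text{nullify},\mathtt{v})$ to all; (6) if $\mathtt{S}$ contains a nullification for $\mathtt{v}$, set $\mathtt{v}:=\mathtt{v}+1$, $\mathtt{nullified}:=$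 false, $\mathtt{notarized}:=\bot$; (7) if $\mathtt{S}$ contains an M-notarization for some $b$ with $b.\text{view}=\mathtt{v}$: if $\mathtt{notarized}=\bot$ and $\mathtt{nullified}=$ false send $(\text{vote},b)$ to all; then set $\mathtt{v}:=\mathtt{v}+1$, $\mathtt{nullified}:=$ false, $\mathtt{notarized}:=\bot$; (8) if $\mathtt{nullified}=$ false, $\mathtt{notarized}\neq\bot$, and $\mathtt{S}$ contains at least $2f+1$ messages signed by distinct processors, each either $(\text{nullify},\mathtt{v})$ or $(\text{vote},b)$ for some $b$ with $b.\text{view}=\mathtt{v}$ and $b\ne\mathtt{notarized}$, then set $\mathtt{nullified}:=$ true and send $(\text{nullify},\mathtt{v})$ to all; (9) if $\mathtt{S}$ contains a new L-notarization for a block $b$, finalise $b$. *)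

theory Defs
  imports Main "HOL-Library.List_Lexorder" "HOL-Library.Product_Lexorder" "HOL-Library.Option_ord"
begin

text \<open>Processors are natural numbers p < n (p_j is j).  A block is a triple
  (view, Tr, h); the hash component of the genesis block is the empty sequence,
  modelled as None, all other blocks carry Some hash.\<close>

type_synonym ('tx, 'h) block = "nat \<times> 'tx list \<times> 'h option"

definition genesis :: "('tx, 'h) block" where
  "genesis = (0, [], None)"

definition bview :: "('tx, 'h) block \<Rightarrow> nat" where
  "bview b = fst b"

definition btr :: "('tx, 'h) block \<Rightarrow> 'tx list" where
  "btr b = fst (snd b)"

definition bhash :: "('tx, 'h) block \<Rightarrow> 'h option" where
  "bhash b = snd (snd b)"

definition lead :: "nat \<Rightarrow> nat \<Rightarrow> nat" where
  "lead n v = v mod n"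

definition wf_block :: "('tx, 'h) block \<Rightarrow> bool" where
  "wf_block b \<longleftrightarrow> b = genesis \<or> (bview b \<ge> 1 \<and> distinct (btr b) \<and> bhash b \<noteq> None)"

text \<open>Payloads of signed messages: votes, nullify messages, and blocks
  (a block is signed by the leader of its view).\<close>
datatype ('tx, 'h) payload = Vote "('tx, 'h) block" | Nullify nat | Prop "('tx, 'h) block"

text \<open>A signed message: (signer, payload).  A packet is a set of signed messages
  sent (and delivered) together, e.g. a forwarded notarization.\<close>
type_synonym ('tx, 'h) msg = "nat \<times> ('tx, 'h) payload"
type_synonym ('tx, 'h) packet = "('tx, 'h) msg set"

definition wf_msg :: "nat \<Rightarrow> ('tx, 'h) msg \<Rightarrow> bool" where
  "wf_msg n m \<longleftrightarrow> fst m < n \<and>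
     (case snd m of
        Vote b \<Rightarrow> wf_block b
      | Nullify v \<Rightarrow> True
      | Prop b \<Rightarrow> wf_block b \<and> b \<noteq> genesis \<and> fst m = lead n (bview b))"

fun payload_blocks :: "('tx, 'h) payload \<Rightarrow> ('tx, 'h) block set" where
  "payload_blocks (Vote b) = {b}"
| "payload_blocks (Nullify v) = {}"
| "payload_blocks (Prop b) = {b}"

definition blocks_in :: "('tx, 'h) msg set \<Rightarrow> ('tx, 'h) block set" where
  "blocks_in S = insert genesis {b. \<exists>s. (s, Vote b) \<in> S \<or> (s, Prop b) \<in> S}"

definition vote_signers :: "nat \<Rightarrow> ('tx, 'h) msg set \<Rightarrow> ('tx, 'h) block \<Rightarrow> nat set" where
  "vote_signers n S b = {p. p < n \<and> (p, Vote b) \<in> S}"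

definition null_signers :: "nat \<Rightarrow> ('tx, 'h) msg set \<Rightarrow> nat \<Rightarrow> nat set" where
  "null_signers n S v = {p. p < n \<and> (p, Nullify v) \<in> S}"

definition has_M :: "nat \<Rightarrow> nat \<Rightarrow> ('tx, 'h) msg set \<Rightarrow> ('tx, 'h) block \<Rightarrow> bool" where
  "has_M n f S b \<longleftrightarrow> b = genesis \<or> 2 * f + 1 \<le> card (vote_signers n S b)"

definition has_L :: "nat \<Rightarrow> nat \<Rightarrow> ('tx, 'h) msg set \<Rightarrow> ('tx, 'h) block \<Rightarrow> bool" where
  "has_L n f S b \<longleftrightarrow> b = genesis \<or> n - f \<le> card (vote_signers n S b)"

definition has_N :: "nat \<Rightarrow> nat \<Rightarrow> ('tx, 'h) msg set \<Rightarrow> nat \<Rightarrow> bool" where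
  "has_N n f S v \<longleftrightarrow> 2 * f + 1 \<le> card (null_signers n S v)"

text \<open>The lexicographically least k-element subset of a set of signers
  (a notarization/nullification is determined by its set of signers).\<close>
definition least_subset :: "nat set \<Rightarrow> nat \<Rightarrow> nat set" where
  "least_subset P k = (ARG_MIN sorted_list_of_set Q. Q \<subseteq> P \<and> card Q = k)"

text \<open>Ancestry: a is an ancestor of b if a is reached from b by following parent hashes.\<close>
definition is_ancestor :: "(('tx, 'h) block \<Rightarrow> 'h) \<Rightarrow> ('tx, 'h) block \<Rightarrow> ('tx, 'h) block \<Rightarrow> bool" where
  "is_ancestor H a b \<longleftrightarrow> (b, a) \<in> {(x, y). bhash x = Some (H y)}\<^sup>*"

definition select_parent ::
  "nat \<Rightarrow> nat \<Rightarrow> ('tx::linorder, 'h::linorder) msg set \<Rightarrow> nat \<Rightarrow> ('tx, 'h) block" where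
  "select_parent n f S v =
     (let v' = (GREATEST w. w < v \<and> (\<exists>b \<in> blocks_in S. bview b = w \<and> has_M n f S b))
      in Min {b \<in> blocks_in S. bview b = v' \<and> has_M n f S b})"

definition valid_proposal ::
  "nat \<Rightarrow> nat \<Rightarrow> (('tx, 'h) block \<Rightarrow> 'h) \<Rightarrow> ('tx, 'h) msg set \<Rightarrow> nat \<Rightarrow> ('tx, 'h) block \<Rightarrow> bool" where
  "valid_proposal n f H S v b \<longleftrightarrow>
     b \<in> blocks_in S \<and> bview b = v \<and> (\<forall>b' \<in> blocks_in S. bview b' = v \<longrightarrow> b' = b) \<and>
     (\<exists>b'. bhash b = Some (H b') \<and> has_M n f S b' \<and>
           (\<forall>w. bview b' < w \<and> w < v \<longrightarrow> has_N n f S w))"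

record ('tx, 'h) lstate =
  lS :: "('tx, 'h) msg set"
  lview :: nat
  lentered :: nat       \<comment> \<open>timeslot at which the current view was entered; timer T = t - lentered\<close>
  lnullified :: bool
  lnotarized :: "('tx, 'h) block option"   \<comment> \<open>None plays the role of bottom\<close>
  lrtx :: "'tx set"      \<comment> \<open>transactions received so far\<close>

definition init_state :: "('tx, 'h) lstate" where
  "init_state = \<lparr>lS = {}, lview = 1, lentered = 0, lnullified = False, lnotarized = None, lrtx = {}\<rparr>"

text \<open>Send a packet to all processors: it is recorded in the outbox and
  immediately counted as received by the sender itself.\<close>
definition bcast :: "('tx, 'h) packet \<Rightarrow> ('tx, 'h) lstate \<times> ('tx, 'h) packet set
                     \<Rightarrow> ('tx, 'h) lstate \<times> ('tx, 'h) packet set" where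
  "bcast pk so = (fst so\<lparr>lS := lS (fst so) \<union> pk\<rparr>, insert pk (snd so))"

definition enter_next :: "nat \<Rightarrow> ('tx, 'h) lstate \<Rightarrow> ('tx, 'h) lstate" where
  "enter_next t st = st\<lparr>lview := Suc (lview st), lnullified := False, lnotarized := None, lentered := t\<rparr>"

text \<open>Steps (1) and (2): forward new nullifications and new M-/L-notarizations.
  Sprev is the value of S at the end of the previous timeslot.\<close>
definition step12 :: "nat \<Rightarrow> nat \<Rightarrow> ('tx, 'h) msg set \<Rightarrow> ('tx, 'h) lstate \<times> ('tx, 'h) packet set
                      \<Rightarrow> ('tx, 'h) lstate \<times> ('tx, 'h) packet set" where
  "step12 n f Sprev so =
     (let S = lS (fst so);
          NN = {(\<lambda>p. (p, Nullify v)) ` least_subset (null_signers n S v) (2 * f + 1) | v.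
                  has_N n f S v \<and> \<not> has_N n f Sprev v};
          MM = {(\<lambda>p. (p, Vote b)) ` least_subset (vote_signers n S b) (2 * f + 1) | b.
                  b \<noteq> genesis \<and> has_M n f S b \<and> \<not> has_M n f Sprev b};
          LL = {(\<lambda>p. (p, Vote b)) ` least_subset (vote_signers n S b) (n - f) | b.
                  b \<noteq> genesis \<and> has_L n f S b \<and> \<not> has_L n f Sprev b}
      in (fst so, snd so \<union> NN \<union> MM \<union> LL))"

text \<open>Step (3): ProposeChild(SelectParent(S, v), v).  The sequence Tr is produced by
  mk_tr from the set R of received transactions and the set X of received
  transactions not contained in any ancestor in S of the parent.\<close>
definition step3 :: "nat \<Rightarrow> nat \<Rightarrow> (('tx::linorder, 'h::linorder) block \<Rightarrow> 'h) \<Rightarrow> nat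
                     \<Rightarrow> ('tx set \<Rightarrow> 'tx set \<Rightarrow> 'tx list)
                     \<Rightarrow> ('tx, 'h) lstate \<times> ('tx, 'h) packet set \<Rightarrow> ('tx, 'h) lstate \<times> ('tx, 'h) packet set" where
  "step3 n f H p mk_tr so =
     (let st = fst so; S = lS st; v = lview st in
      if p = lead n v then
        (let par = select_parent n f S v;
             X = {x \<in> lrtx st. \<forall>b' \<in> blocks_in S. is_ancestor H b' par \<longrightarrow> x \<notin> set (btr b')};
             blk = (v, mk_tr (lrtx st) X, Some (H par))
         in bcast {(p, Prop blk)} so)
      else so)"

definition step4 :: "nat \<Rightarrow> nat \<Rightarrow> (('tx, 'h) block \<Rightarrow> 'h) \<Rightarrow> nat
                     \<Rightarrow> ('tx, 'h) lstate \<times> ('tx, 'h) packet set \<Rightarrow> ('tx, 'h) lstate \<times> ('tx, 'h) packet set" where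
  "step4 n f H p so =
     (let st = fst so; S = lS st; v = lview st in
      if (\<exists>b. valid_proposal n f H S v b) \<and> lnotarized st = None \<and> \<not> lnullified st then
        (let b = (THE b. valid_proposal n f H S v b)
         in bcast {(p, Vote b)} (st\<lparr>lnotarized := Some b\<rparr>, snd so))
      else so)"

definition step5 :: "nat \<Rightarrow> nat \<Rightarrow> nat
                     \<Rightarrow> ('tx, 'h) lstate \<times> ('tx, 'h) packet set \<Rightarrow> ('tx, 'h) lstate \<times> ('tx, 'h) packet set" where
  "step5 \<Delta> t p so =
     (let st = fst so in
      if t - lentered st = 2 * \<Delta> \<and> \<not> lnullified st \<and> lnotarized st = None then
        bcast {(p, Nullify (lview st))} (st\<lparr>lnullified := True\<rparr>, snd so)
      else so)"

definition step6 :: "nat \<Rightarrow> nat \<Rightarrow> nat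
                     \<Rightarrow> ('tx, 'h) lstate \<times> ('tx, 'h) packet set \<Rightarrow> ('tx, 'h) lstate \<times> ('tx, 'h) packet set" where
  "step6 n f t so =
     (let st = fst so in
      if has_N n f (lS st) (lview st) then (enter_next t st, snd so) else so)"

text \<open>Step (7); if several blocks of view v have M-notarizations, the block b is
  chosen by the choice function ch.\<close>
definition step7 :: "nat \<Rightarrow> nat \<Rightarrow> nat \<Rightarrow> nat \<Rightarrow> (('tx, 'h) block set \<Rightarrow> ('tx, 'h) block)
                     \<Rightarrow> ('tx, 'h) lstate \<times> ('tx, 'h) packet set \<Rightarrow> ('tx, 'h) lstate \<times> ('tx, 'h) packet set" where
  "step7 n f t p ch so =
     (let st = fst so; S = lS st; v = lview st;
          Bs = {b \<in> blocks_in S. bview b = v \<and> has_M n f S b} in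
      if Bs \<noteq> {} then
        (let b = ch Bs;
             so' = (if lnotarized st = None \<and> \<not> lnullified st then bcast {(p, Vote b)} so else so)
         in (enter_next t (fst so'), snd so'))
      else so)"

definition step8 :: "nat \<Rightarrow> nat \<Rightarrow> nat
                     \<Rightarrow> ('tx, 'h) lstate \<times> ('tx, 'h) packet set \<Rightarrow> ('tx, 'h) lstate \<times> ('tx, 'h) packet set" where
  "step8 n f p so =
     (let st = fst so; S = lS st; v = lview st in
      case lnotarized st of
        None \<Rightarrow> so
      | Some nb \<Rightarrow>
          (if \<not> lnullified st \<and>
              2 * f + 1 \<le> card {q. q < n \<and> ((q, Nullify v) \<in> S \<or>
                                   (\<exists>b. bview b = v \<and> b \<noteq> nb \<and> (q, Vote b) \<in> S))}
           then bcast {(p, Nullify v)} (st\<lparr>lnullified := True\<rparr>, snd so)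
           else so))"

text \<open>Returns the state at the end of timeslot t and the set of packets sent to all.
  (Step (9), finalisation, only updates the log and is omitted.)\<close>
definition round ::
  "nat \<Rightarrow> nat \<Rightarrow> nat \<Rightarrow> (('tx::linorder, 'h::linorder) block \<Rightarrow> 'h) \<Rightarrow> nat \<Rightarrow> nat
   \<Rightarrow> ('tx set \<Rightarrow> 'tx set \<Rightarrow> 'tx list) \<Rightarrow> (('tx, 'h) block set \<Rightarrow> ('tx, 'h) block)
   \<Rightarrow> ('tx, 'h) lstate \<Rightarrow> ('tx, 'h) packet set \<Rightarrow> 'tx set
   \<Rightarrow> ('tx, 'h) lstate \<times> ('tx, 'h) packet set" where
  "round n f \<Delta> H p t mk_tr ch prev rcv txin =
     (let st0 = prev\<lparr>lS := lS prev \<union> \<Union> rcv, lrtx := lrtx prev \<union> txin\<rparr>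
      in (step8 n f p \<circ> step7 n f t p ch \<circ> step6 n f t \<circ> step5 \<Delta> t p \<circ> step4 n f H p
          \<circ> step3 n f H p mk_tr \<circ> step12 n f (lS prev)) (st0, {}))"

record ('tx, 'h) execution =
  ex_corrupt :: "nat \<Rightarrow> nat option"   \<comment> \<open>Some c: corrupted from timeslot c on; None: correct\<close>
  ex_sent :: "nat \<Rightarrow> nat \<Rightarrow> (nat \<times> ('tx, 'h) packet) set"  \<comment> \<open>sender, time: (recipient, packet)\<close>
  ex_recv :: "nat \<Rightarrow> nat \<Rightarrow> ('tx, 'h) packet set"          \<comment> \<open>receiver, time: packets delivered\<close>
  ex_txs :: "nat \<Rightarrow> nat \<Rightarrow> 'tx set"
  ex_state :: "nat \<Rightarrow> nat \<Rightarrow> ('tx, 'h) lstate"               \<comment> \<open>local state at end of timeslot\<close>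
  ex_mktr :: "nat \<Rightarrow> nat \<Rightarrow> 'tx set \<Rightarrow> 'tx set \<Rightarrow> 'tx list"
  ex_choice :: "nat \<Rightarrow> nat \<Rightarrow> ('tx, 'h) block set \<Rightarrow> ('tx, 'h) block"

definition uncorrupted_at :: "('tx, 'h) execution \<Rightarrow> nat \<Rightarrow> nat \<Rightarrow> bool" where
  "uncorrupted_at E p t \<longleftrightarrow> (case ex_corrupt E p of None \<Rightarrow> True | Some c \<Rightarrow> t < c)"

definition execution ::
  "nat \<Rightarrow> nat \<Rightarrow> nat \<Rightarrow> nat \<Rightarrow> (('tx::linorder, 'h::linorder) block \<Rightarrow> 'h) \<Rightarrow> ('tx, 'h) execution \<Rightarrow> bool" where
  "execution n f \<Delta> GST H E \<longleftrightarrow>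
     \<comment> \<open>no hash collisions\<close>
     inj H \<and>
     \<comment> \<open>at most f processors are ever corrupted\<close>
     card {p. p < n \<and> ex_corrupt E p \<noteq> None} \<le> f \<and>
     \<comment> \<open>only processors send/receive; finitely many finite well-formed packets\<close>
     (\<forall>p t. finite (ex_sent E p t) \<and> finite (ex_recv E p t) \<and> finite (ex_txs E p t)) \<and>
     (\<forall>p t q pk. (q, pk) \<in> ex_sent E p t \<longrightarrow>
        p < n \<and> q < n \<and> finite pk \<and> (\<forall>m \<in> pk. wf_msg n m)) \<and>
     \<comment> \<open>partial synchrony: every sent packet arrives at some t' with t < t' <= max GST t + Delta\<close>
     (\<forall>p t q pk. (q, pk) \<in> ex_sent E p t \<longrightarrow>
        (\<exists>t'. t < t' \<and> t' \<le> max GST t + \<Delta> \<and> pk \<in> ex_recv E q t')) \<and>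
     \<comment> \<open>only sent packets are delivered\<close>
     (\<forall>q t' pk. pk \<in> ex_recv E q t' \<longrightarrow> (\<exists>p t. t < t' \<and> (q, pk) \<in> ex_sent E p t)) \<and>
     \<comment> \<open>unforgeability: a message signed by s, sent at t while s is not corrupted, was sent by s\<close>
     (\<forall>p t q pk s pl. (q, pk) \<in> ex_sent E p t \<longrightarrow> (s, pl) \<in> pk \<longrightarrow> uncorrupted_at E s t \<longrightarrow>
        (\<exists>t' \<le> t. \<exists>q' pk'. (q', pk') \<in> ex_sent E s t' \<and> (s, pl) \<in> pk')) \<and>
     \<comment> \<open>every non-genesis block occurring in a message is signed by the leader of its view\<close>
     (\<forall>p t q pk m b. (q, pk) \<in> ex_sent E p t \<longrightarrow> m \<in> pk \<longrightarrow> b \<in> payload_blocks (snd m) \<longrightarrow>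
        b \<noteq> genesis \<longrightarrow>
        (\<exists>t' \<le> t. \<exists>p' q' pk'. (q', pk') \<in> ex_sent E p' t' \<and> (lead n (bview b), Prop b) \<in> pk')) \<and>
     \<comment> \<open>ProposeChild forms a sequence of distinct received transactions containing X\<close>
     (\<forall>p t R X. finite R \<longrightarrow> X \<subseteq> R \<longrightarrow>
        distinct (ex_mktr E p t R X) \<and> X \<subseteq> set (ex_mktr E p t R X) \<and> set (ex_mktr E p t R X) \<subseteq> R) \<and>
     (\<forall>p t Bs. Bs \<noteq> {} \<longrightarrow> ex_choice E p t Bs \<in> Bs) \<and>
     \<comment> \<open>processors follow the protocol while not corrupted\<close>
     (\<forall>p t. p < n \<longrightarrow> uncorrupted_at E p t \<longrightarrow>
        (let (st', out) = round n f \<Delta> H p t (ex_mktr E p t) (ex_choice E p t)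
                            (if t = 0 then init_state else ex_state E p (t - 1))
                            (ex_recv E p t) (ex_txs E p t)
         in ex_state E p t = st' \<and> ex_sent E p t = {(q, pk). q < n \<and> pk \<in> out}))"

definition sends_vote :: "('tx, 'h) execution \<Rightarrow> nat \<Rightarrow> ('tx, 'h) block \<Rightarrow> bool" where
  "sends_vote E p b \<longleftrightarrow> (\<exists>t q pk. (q, pk) \<in> ex_sent E p t \<and> (p, Vote b) \<in> pk)"

definition receives_M :: "nat \<Rightarrow> nat \<Rightarrow> ('tx, 'h) execution \<Rightarrow> ('tx, 'h) block \<Rightarrow> bool" where
  "receives_M n f E b \<longleftrightarrow> b = genesis \<or> 2 * f + 1 \<le> card {p. p < n \<and> sends_vote E p b}"

definition receives_L :: "nat \<Rightarrow> nat \<Rightarrow> ('tx, 'h) execution \<Rightarrow> ('tx, 'h) block \<Rightarrow> bool" where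
  "receives_L n f E b \<longleftrightarrow> b = genesis \<or> n - f \<le> card {p. p < n \<and> sends_vote E p b}"

end

(* A correct processor votes at most once per view.  It votes only for a block of its current
   view while its notarized slot is empty, and then either fills the slot or leaves the view at
   once; votes of its own that reach it from others were, by unforgeability, sent by itself
   earlier.  Hence the voters of two distinct blocks of one view share only corrupted processors,
   at most f of them.  But n - f voters of b and 2f + 1 voters of b' among n processors share at
   least f + 1.  View 0 is degenerate: votes carry well-formed blocks, so there only the genesis
   block can be M-notarized. *)

theory Submission
  imports Defs
begin

declare split_paired_All [simp del] split_paired_Ex [simp del]

lemma least_subset_subset:
  assumes "finite P" "k \<le> card P"
  shows "least_subset P k \<subseteq> P"
proof -
  let ?C = "{Q. Q \<subseteq> P \<and> card Q = k}"
  have "finite ?C" using assms(1) by (simp add: finite_subset[of ?C "Pow P"])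
  moreover obtain Q where "Q \<subseteq> P" "card Q = k" using obtain_subset_with_card_n[OF assms(2)] by blast
  then have "?C \<noteq> {}" by blast
  ultimately have "arg_min_on sorted_list_of_set ?C \<in> ?C" by (rule arg_min_if_finite(1))
  then show ?thesis unfolding least_subset_def arg_min_on_def by simp
qed

lemma least_vote_signers_voted:
  "k \<le> card (vote_signers n S b) \<Longrightarrow> q \<in> least_subset (vote_signers n S b) k \<Longrightarrow> (q, Vote b) \<in> S"
  using least_subset_subset[of "vote_signers n S b" k] by (auto simp: vote_signers_def)

lemma least_null_signers_nullified:
  "k \<le> card (null_signers n S v) \<Longrightarrow> q \<in> least_subset (null_signers n S v) k \<Longrightarrow> (q, Nullify v) \<in> S"
  using least_subset_subset[of "null_signers n S v" k] by (auto simp: null_signers_def)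

lemma step12_forwards_received:
  assumes "pk \<in> snd (step12 n f Sprev so)" "pk \<notin> snd so"
  shows "pk \<subseteq> lS (fst so)"
  using assms by (auto simp: step12_def Let_def has_M_def has_L_def has_N_def
                       intro: least_vote_signers_voted least_null_signers_nullified)

lemma fst_step12 [simp]: "fst (step12 n f Sprev so) = fst so"
  by (simp add: step12_def Let_def)

definition own_votes_inv :: "nat \<Rightarrow> ('tx, 'h) lstate \<Rightarrow> bool" where
  "own_votes_inv p st \<longleftrightarrow>
     (\<forall>b. (p, Vote b) \<in> lS st \<longrightarrow>
        bview b < lview st \<or> (bview b = lview st \<and> lnotarized st = Some b)) \<and>
     (\<forall>b b'. (p, Vote b) \<in> lS st \<longrightarrow> (p, Vote b') \<in> lS st \<longrightarrow> bview b = bview b' \<longrightarrow> b = b')"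

definition outbox_inv :: "nat \<Rightarrow> ('tx, 'h) lstate \<times> ('tx, 'h) packet set \<Rightarrow> bool" where
  "outbox_inv p so \<longleftrightarrow> own_votes_inv p (fst so) \<and>
     (\<forall>pk \<in> snd so. \<forall>b. (p, Vote b) \<in> pk \<longrightarrow> (p, Vote b) \<in> lS (fst so))"

definition sound_step :: "nat \<Rightarrow> (('tx, 'h) lstate \<times> ('tx, 'h) packet set
                           \<Rightarrow> ('tx, 'h) lstate \<times> ('tx, 'h) packet set) \<Rightarrow> bool" where
  "sound_step p g \<longleftrightarrow>
     (\<forall>so. lS (fst so) \<subseteq> lS (fst (g so)) \<and> (outbox_inv p so \<longrightarrow> outbox_inv p (g so)))"

lemma sound_stepI:
  assumes "\<And>st out. lS st \<subseteq> lS (fst (g (st, out)))"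
    and "\<And>st out. outbox_inv p (st, out) \<Longrightarrow> outbox_inv p (g (st, out))"
  shows "sound_step p g"
  using assms unfolding sound_step_def by (metis prod.collapse)

lemma sound_step_comp: "sound_step p g \<Longrightarrow> sound_step p h \<Longrightarrow> sound_step p (g \<circ> h)"
  unfolding sound_step_def by (metis comp_apply subset_trans)

lemma outbox_inv_enter_next:
  "outbox_inv p (st, out) \<Longrightarrow> outbox_inv p (enter_next t st, out)"
  unfolding outbox_inv_def own_votes_inv_def enter_next_def by (auto simp: less_Suc_eq)

lemma outbox_inv_vote:
  assumes "outbox_inv p (st, out)" "lnotarized st = None" "bview b = lview st"
  shows "outbox_inv p (bcast {(p, Vote b)} (st\<lparr>lnotarized := Some b\<rparr>, out))"
proof -
  have earlier: "bview c < lview st" if "(p, Vote c) \<in> lS st" for c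
    using assms(1,2) that by (auto simp: outbox_inv_def own_votes_inv_def)
  show ?thesis
    using assms(1,3) earlier unfolding outbox_inv_def own_votes_inv_def bcast_def
    by (auto; metis less_irrefl)
qed

(* Step (7) votes without setting the notarized slot; the invariant survives only because the
   view is left in the same step. *)
lemma outbox_inv_vote_enter_next:
  assumes "outbox_inv p (st, out)" "lnotarized st = None" "bview b = lview st"
  shows "outbox_inv p (enter_next t (st\<lparr>lS := insert (p, Vote b) (lS st)\<rparr>), insert {(p, Vote b)} out)"
proof -
  have "outbox_inv p (bcast {(p, Vote b)} (st\<lparr>lnotarized := Some b\<rparr>, out))"
    using assms by (rule outbox_inv_vote)
  then have "outbox_inv p (enter_next t (st\<lparr>lnotarized := Some b, lS := lS st \<union> {(p, Vote b)}\<rparr>),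
                           insert {(p, Vote b)} out)"
    by (simp add: bcast_def outbox_inv_enter_next)
  then show ?thesis by (simp add: enter_next_def)
qed

lemma valid_proposal_view:
  assumes "valid_proposal n f H S v b"
  shows "bview (THE b. valid_proposal n f H S v b) = v"
proof -
  have "\<exists>!b. valid_proposal n f H S v b" using assms unfolding valid_proposal_def by blast
  from theI'[OF this] show ?thesis unfolding valid_proposal_def by blast
qed

lemma step7_cases:
  assumes "\<forall>Bs. Bs \<noteq> {} \<longrightarrow> ch Bs \<in> Bs"
  obtains "step7 n f t p ch (st, out) = (st, out)"
  | b where "lnotarized st = None" "bview b = lview st"
      "step7 n f t p ch (st, out) =
         (enter_next t (st\<lparr>lS := insert (p, Vote b) (lS st)\<rparr>), insert {(p, Vote b)} out)"
  | "step7 n f t p ch (st, out) = (enter_next t st, out)"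
proof -
  define Bs where "Bs = {b \<in> blocks_in (lS st). bview b = lview st \<and> has_M n f (lS st) b}"
  have step: "step7 n f t p ch (st, out) =
    (if Bs \<noteq> {} then
       (let so' = (if lnotarized st = None \<and> \<not> lnullified st then bcast {(p, Vote (ch Bs))} (st, out)
                   else (st, out))
        in (enter_next t (fst so'), snd so'))
     else (st, out))"
    unfolding step7_def Let_def Bs_def fst_conv snd_conv ..
  show thesis
  proof (cases "Bs = {}")
    case True
    show thesis by (intro that(1)) (simp add: step True)
  next
    case False
    with assms have "ch Bs \<in> Bs" by blast
    then have view: "bview (ch Bs) = lview st" by (simp add: Bs_def)
    show thesis
    proof (cases "lnotarized st = None \<and> \<not> lnullified st")
      case True
      show thesis by (intro that(2)[OF _ view]) (use False True in \<open>simp_all add: step bcast_def\<close>)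
    next
      case notvote: False
      show thesis by (intro that(3)) (use False notvote in \<open>auto simp: step\<close>)
    qed
  qed
qed

lemma sound_step12: "sound_step p (step12 n f Sprev)"
  unfolding sound_step_def outbox_inv_def using step12_forwards_received by fastforce

lemma sound_step3: "sound_step p (step3 n f H p mk_tr)"
  by (auto simp: sound_step_def step3_def Let_def outbox_inv_def own_votes_inv_def bcast_def)

lemma sound_step4: "sound_step p (step4 n f H p)"
proof (rule sound_stepI)
  fix st out
  show "lS st \<subseteq> lS (fst (step4 n f H p (st, out)))" by (auto simp: step4_def Let_def bcast_def)
  assume inv: "outbox_inv p (st, out)"
  show "outbox_inv p (step4 n f H p (st, out))"
  proof (cases "(\<exists>b. valid_proposal n f H (lS st) (lview st) b) \<and> lnotarized st = None \<and> \<not> lnullified st")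
    case True
    then obtain b where "valid_proposal n f H (lS st) (lview st) b" by blast
    then have "bview (THE b. valid_proposal n f H (lS st) (lview st) b) = lview st"
      by (rule valid_proposal_view)
    with True inv show ?thesis by (auto simp: step4_def Let_def outbox_inv_vote)
  next
    case False
    with inv show ?thesis by (auto simp: step4_def Let_def)
  qed
qed

lemma sound_step5: "sound_step p (step5 \<Delta> t p)"
  by (auto simp: sound_step_def step5_def Let_def outbox_inv_def own_votes_inv_def bcast_def)

lemma sound_step6: "sound_step p (step6 n f t)"
  unfolding sound_step_def step6_def Let_def using outbox_inv_enter_next[of p "fst so" "snd so" for so]
  by (auto simp: enter_next_def)

lemma sound_step7:
  assumes "\<forall>Bs. Bs \<noteq> {} \<longrightarrow> ch Bs \<in> Bs"
  shows "sound_step p (step7 n f t p ch)"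
proof (rule sound_stepI)
  fix st out
  show "lS st \<subseteq> lS (fst (step7 n f t p ch (st, out)))"
    by (auto simp: step7_def Let_def bcast_def enter_next_def)
  assume "outbox_inv p (st, out)"
  then show "outbox_inv p (step7 n f t p ch (st, out))"
    by (cases rule: step7_cases[OF assms, of n f t p st out])
       (simp_all add: outbox_inv_vote_enter_next outbox_inv_enter_next)
qed

lemma sound_step8: "sound_step p (step8 n f p)"
  by (auto simp: sound_step_def step8_def Let_def outbox_inv_def own_votes_inv_def bcast_def
           split: option.split)

lemma round_inv:
  assumes "\<forall>Bs. Bs \<noteq> {} \<longrightarrow> ch Bs \<in> Bs"
  shows round_lS_mono: "lS prev \<subseteq> lS (fst (round n f \<Delta> H p t mk_tr ch prev rcv txin))"
    and round_outbox_inv: "own_votes_inv p prev \<Longrightarrow> \<forall>b. (p, Vote b) \<in> \<Union>rcv \<longrightarrow> (p, Vote b) \<in> lS prev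
             \<Longrightarrow> outbox_inv p (round n f \<Delta> H p t mk_tr ch prev rcv txin)"
proof -
  let ?st0 = "prev\<lparr>lS := lS prev \<union> \<Union>rcv, lrtx := lrtx prev \<union> txin\<rparr>"
  let ?r = "round n f \<Delta> H p t mk_tr ch prev rcv txin"
  have "sound_step p (step8 n f p \<circ> step7 n f t p ch \<circ> step6 n f t \<circ> step5 \<Delta> t p \<circ> step4 n f H p
                      \<circ> step3 n f H p mk_tr \<circ> step12 n f (lS prev))"
    by (intro sound_step_comp sound_step12 sound_step3 sound_step4 sound_step5 sound_step6
              sound_step7[OF assms(1)] sound_step8)
  then have sound: "lS ?st0 \<subseteq> lS (fst ?r) \<and> (outbox_inv p (?st0, {}) \<longrightarrow> outbox_inv p ?r)"
    unfolding sound_step_def round_def Let_def by (metis fst_conv)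
  then show "lS prev \<subseteq> lS (fst ?r)" by auto
  assume "own_votes_inv p prev" "\<forall>b. (p, Vote b) \<in> \<Union>rcv \<longrightarrow> (p, Vote b) \<in> lS prev"
  then have "outbox_inv p (?st0, {})" by (auto simp: outbox_inv_def own_votes_inv_def)
  with sound show "outbox_inv p ?r" by blast
qed

lemma
  assumes "execution n f \<Delta> GST H E"
  shows execution_corrupt_card: "card {p. p < n \<and> ex_corrupt E p \<noteq> None} \<le> f"
    and execution_wf_msg: "(q, pk) \<in> ex_sent E p t \<Longrightarrow> m \<in> pk \<Longrightarrow> wf_msg n m"
    and execution_recv_sent: "pk \<in> ex_recv E q t' \<Longrightarrow> \<exists>p t. t < t' \<and> (q, pk) \<in> ex_sent E p t"
    and execution_unforgeable: "(q, pk) \<in> ex_sent E p t \<Longrightarrow> (s, pl) \<in> pk \<Longrightarrow> uncorrupted_at E s t \<Longrightarrow>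
        \<exists>t' \<le> t. \<exists>q' pk'. (q', pk') \<in> ex_sent E s t' \<and> (s, pl) \<in> pk'"
    and execution_choice: "\<forall>Bs. Bs \<noteq> {} \<longrightarrow> ex_choice E p t Bs \<in> Bs"
  using assms unfolding execution_def by simp_all

lemma execution_round:
  assumes "execution n f \<Delta> GST H E" "p < n" "uncorrupted_at E p t"
  defines "r \<equiv> round n f \<Delta> H p t (ex_mktr E p t) (ex_choice E p t)
                 (if t = 0 then init_state else ex_state E p (t - 1)) (ex_recv E p t) (ex_txs E p t)"
  shows "ex_state E p t = fst r \<and> ex_sent E p t = {(q, pk). q < n \<and> pk \<in> snd r}"
proof -
  have "case r of (st, out) \<Rightarrow> ex_state E p t = st \<and> ex_sent E p t = {(q, pk). q < n \<and> pk \<in> out}"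
    using assms unfolding execution_def by simp
  then show ?thesis by (simp add: case_prod_beta)
qed

lemma correct_lS_mono:
  assumes "execution n f \<Delta> GST H E" "p < n" "ex_corrupt E p = None"
  shows "mono (\<lambda>t. lS (ex_state E p t))"
  unfolding mono_iff_le_Suc
proof
  fix t
  have "uncorrupted_at E p (Suc t)" using assms(3) by (simp add: uncorrupted_at_def)
  then show "lS (ex_state E p t) \<subseteq> lS (ex_state E p (Suc t))"
    using execution_round[OF assms(1,2)] round_lS_mono[OF execution_choice[OF assms(1)]] by simp
qed

lemma correct_outbox_inv:
  assumes ex: "execution n f \<Delta> GST H E" and p: "p < n" "ex_corrupt E p = None"
  shows "own_votes_inv p (ex_state E p t) \<and>
    (\<forall>q pk b. (q, pk) \<in> ex_sent E p t \<longrightarrow> (p, Vote b) \<in> pk \<longrightarrow> (p, Vote b) \<in> lS (ex_state E p t))"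
proof (induction t rule: less_induct)
  case (less t)
  have unc: "uncorrupted_at E p t'" for t' using p(2) by (simp add: uncorrupted_at_def)
  define prev where "prev = (if t = 0 then init_state else ex_state E p (t - 1))"
  have "own_votes_inv p prev"
    using less[of "t - 1"] by (cases "t = 0") (simp_all add: prev_def init_state_def own_votes_inv_def)
  moreover have "(p, Vote b) \<in> lS prev" if received: "(p, Vote b) \<in> \<Union>(ex_recv E p t)" for b
  proof -
    obtain pk where pk: "pk \<in> ex_recv E p t" "(p, Vote b) \<in> pk" using received by blast
    obtain p0 t0 where t0: "t0 < t" "(p, pk) \<in> ex_sent E p0 t0"
      using execution_recv_sent[OF ex pk(1)] by blast
    obtain t' q' pk' where t': "t' \<le> t0" "(q', pk') \<in> ex_sent E p t'" "(p, Vote b) \<in> pk'"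
      using execution_unforgeable[OF ex t0(2) pk(2) unc] by blast
    have "(p, Vote b) \<in> lS (ex_state E p t')" using less[of t'] t0 t' by auto
    moreover have "lS (ex_state E p t') \<subseteq> lS (ex_state E p (t - 1))"
      using monoD[OF correct_lS_mono[OF ex p], of t' "t - 1"] t0 t' by simp
    ultimately show ?thesis using t0 by (auto simp: prev_def)
  qed
  ultimately have "outbox_inv p (round n f \<Delta> H p t (ex_mktr E p t) (ex_choice E p t) prev
                                  (ex_recv E p t) (ex_txs E p t))"
    by (intro round_outbox_inv[OF execution_choice[OF ex]]) blast+
  then show ?case
    using execution_round[OF ex p(1) unc, of t] unfolding prev_def outbox_inv_def by auto
qed

lemma correct_votes_once_per_view:
  assumes ex: "execution n f \<Delta> GST H E" and p: "p < n" "ex_corrupt E p = None"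
    and "sends_vote E p b" "sends_vote E p b'" "bview b = bview b'"
  shows "b = b'"
proof -
  have in_state: "\<exists>t. (p, Vote c) \<in> lS (ex_state E p t)" if "sends_vote E p c" for c
    using that correct_outbox_inv[OF ex p] unfolding sends_vote_def by blast
  obtain t t' where "(p, Vote b) \<in> lS (ex_state E p t)" "(p, Vote b') \<in> lS (ex_state E p t')"
    using in_state assms(4,5) by blast
  then have "(p, Vote b) \<in> lS (ex_state E p (max t t'))" "(p, Vote b') \<in> lS (ex_state E p (max t t'))"
    using monoD[OF correct_lS_mono[OF ex p], of t "max t t'"] monoD[OF correct_lS_mono[OF ex p], of t' "max t t'"]
    by auto
  with correct_outbox_inv[OF ex p] assms(6) show ?thesis unfolding own_votes_inv_def by blast
qed

lemma receives_M_view_0: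
  assumes "execution n f \<Delta> GST H E" "receives_M n f E b" "bview b = 0"
  shows "b = genesis"
proof (rule ccontr)
  assume "b \<noteq> genesis"
  with assms(2) have "0 < card {p. p < n \<and> sends_vote E p b}" by (simp add: receives_M_def)
  then obtain p t q pk where "(q, pk) \<in> ex_sent E p t" "(p, Vote b) \<in> pk"
    unfolding sends_vote_def card_gt_0_iff by blast
  then have "wf_block b" using execution_wf_msg[OF assms(1)] by (fastforce simp: wf_msg_def)
  with \<open>b \<noteq> genesis\<close> assms(3) show False by (simp add: wf_block_def)
qed

lemma receives_L_imp_M: "3 * f + 1 \<le> n \<Longrightarrow> receives_L n f E b \<Longrightarrow> receives_M n f E b"
  unfolding receives_L_def receives_M_def by linarith

lemma card_Int_lower_bound:
  assumes "A \<subseteq> {..<n}" "B \<subseteq> {..<n}" "n + k \<le> card A + card B"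
  shows "k \<le> card (A \<inter> B)"
proof -
  have "finite A" "finite B" using assms(1,2) finite_subset by blast+
  then have "card A + card B = card (A \<union> B) + card (A \<inter> B)" by (rule card_Un_Int)
  moreover have "card (A \<union> B) \<le> n" using card_mono[of "{..<n}" "A \<union> B"] assms(1,2) by simp
  ultimately show ?thesis using assms(3) by linarith
qed

theorem lemma2:
  fixes n f \<Delta> GST :: nat
    and H :: "('tx::linorder, 'h::linorder) block \<Rightarrow> 'h"
    and E :: "('tx, 'h) execution"
    and b :: "('tx, 'h) block"
  assumes "5 * f + 1 \<le> n"
    and "execution n f \<Delta> GST H E"
    and "receives_L n f E b"
  shows "\<not> (\<exists>b'. b' \<noteq> b \<and> bview b' = bview b \<and> receives_M n f E b')"
proof
  assume "\<exists>b'. b' \<noteq> b \<and> bview b' = bview b \<and> receives_M n f E b'"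
  then obtain b' where b': "b' \<noteq> b" "bview b' = bview b" "receives_M n f E b'" by blast
  have "receives_M n f E b" using assms(1,3) by (intro receives_L_imp_M) simp_all
  have "bview b \<noteq> 0"
  proof
    assume "bview b = 0"
    then have "b = genesis" "b' = genesis"
      using receives_M_view_0[OF assms(2)] \<open>receives_M n f E b\<close> b'(2,3) by simp_all
    with b'(1) show False by simp
  qed
  then have non_genesis: "b \<noteq> genesis" "b' \<noteq> genesis" using b'(2) by (auto simp: genesis_def bview_def)
  let ?voters = "\<lambda>c. {p. p < n \<and> sends_vote E p c}"
  have "n + (f + 1) \<le> card (?voters b) + card (?voters b')"
    using assms(1,3) b'(3) non_genesis by (auto simp: receives_L_def receives_M_def)
  then have "f + 1 \<le> card (?voters b \<inter> ?voters b')" by (intro card_Int_lower_bound) auto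
  have "?voters b \<inter> ?voters b' \<subseteq> {p. p < n \<and> ex_corrupt E p \<noteq> None}"
    using correct_votes_once_per_view[OF assms(2)] b'(1,2) by blast
  then have "card (?voters b \<inter> ?voters b') \<le> card {p. p < n \<and> ex_corrupt E p \<noteq> None}"
    by (rule card_mono[rotated]) simp
  also have "\<dots> \<le> f" by (rule execution_corrupt_card[OF assms(2)])
  finally show False using \<open>f + 1 \<le> card (?voters b \<inter> ?voters b')\<close> by simp
qed

end
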